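(* Let $\mathcal D$ be an (extremal epi, mono) category. Then there is a faithful functor $R\colon\mathcal P(\mathcal D)\to\mathcal Q(\mathcal D)$ which is the identity on underlying objects and morphisms of $\mathcal D$, given on objects by $R(d,F)=(d,\hat F)$ where $\hat F$ is the saturation of the class of extremal epimorphisms $e_\phi$ appearing in (extremal epi, mono)-factorisations $\phi=m_\phi e_\phi$ of the elements $\phi\in F$. Moreover $R\circ I=\mathrm{id}_{\mathcal Q(\mathcal D)}$, where $I\colon\mathcal Q(\mathcal D)\to\mathcal P(\mathcal D)$ is the inclusion, and $R$ is right adjoint to $I$.
   Context: For a category $\mathcal D$ and an object $d$, $M(d)$ denotes the class of all morphisms of $\mathcal D$ with source $d$, quasi-ordered by $\phi_1\ge\phi_2$ iff there is a morphism $h$ with $h\phi_1=\phi_2$. A projective filtration on $d$ is a non-empty, directed, saturated subclass $F\subseteq M(d)$ (saturated: $\phi_1\in F$ and $\phi_1\ge\phi_2$ imply $\phi_2\in F$). For a non-empty directed subclass $S\subseteq M(d)$, its saturation is $\{\psi\in M(d):\psi\le\phi\text{ for some }\phi\in S\}$. A subclass $S\subseteq F$ is initial if every $\phi\in F$ satisfies $\phi\le\psi$ for some $\psi\in S$. For $f\colon d'\to d$, the pull back $f^*(F)$ is $\{\phi f:\phi\in F\}$. The category $\mathcal P(\mathcal D)$ has objects pairs $(d,F)$ with $F$ a projective filtration on $d$; a morphism $(d_1,F_1)\to(d_2,F_2)$ is a morphism $f\colon d_1\to d_2$ of $\mathcal D$ with $f^*(F_2)\subseteq F_1$. A projective filtration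 is reduced if it has an initial subclass consisting of extremal epimorphisms; $\mathcal Q(\mathcal D)$ is the full subcategory of $\mathcal P(\mathcal D)$ on objects $(d,F)$ with $F$ reduced. An (extremal epi, mono) category is one in which every morphism factors as an extremal epimorphism followed by a monomorphism and such factorisations have the unique diagonal fill-in property. *)

theory Defs
  imports Main
begin

text \<open>A category with object type 'o and arrow type 'a. cmp g f is g after f.\<close>
record ('o,'a) cat =
  ob :: "'o set"
  ar :: "'a set"
  dm :: "'a \<Rightarrow> 'o"
  cd :: "'a \<Rightarrow> 'o"
  ident :: "'o \<Rightarrow> 'a"
  cmp :: "'a \<Rightarrow> 'a \<Rightarrow> 'a"

definition hom :: "('o,'a) cat \<Rightarrow> 'o \<Rightarrow> 'o \<Rightarrow> 'a set" where
  "hom C x y = {f \<in> ar C. dm C f = x \<and> cd C f = y}"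

definition category :: "('o,'a) cat \<Rightarrow> bool" where
  "category C \<longleftrightarrow>
     (\<forall>f \<in> ar C. dm C f \<in> ob C \<and> cd C f \<in> ob C) \<and>
     (\<forall>x \<in> ob C. ident C x \<in> hom C x x) \<and>
     (\<forall>f \<in> ar C. \<forall>g \<in> ar C. cd C f = dm C g \<longrightarrow> cmp C g f \<in> hom C (dm C f) (cd C g)) \<and>
     (\<forall>f \<in> ar C. cmp C (ident C (cd C f)) f = f \<and> cmp C f (ident C (dm C f)) = f) \<and>
     (\<forall>f \<in> ar C. \<forall>g \<in> ar C. \<forall>h \<in> ar C. cd C f = dm C g \<and> cd C g = dm C h \<longrightarrow>
        cmp C h (cmp C g f) = cmp C (cmp C h g) f)"

definition is_functor :: "('o,'a) cat \<Rightarrow> ('p,'b) cat \<Rightarrow> ('o \<Rightarrow> 'p) \<Rightarrow> ('a \<Rightarrow> 'b) \<Rightarrow> bool" where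
  "is_functor C E Fo Fa \<longleftrightarrow>
     (\<forall>x \<in> ob C. Fo x \<in> ob E) \<and>
     (\<forall>f \<in> ar C. Fa f \<in> hom E (Fo (dm C f)) (Fo (cd C f))) \<and>
     (\<forall>x \<in> ob C. Fa (ident C x) = ident E (Fo x)) \<and>
     (\<forall>f \<in> ar C. \<forall>g \<in> ar C. cd C f = dm C g \<longrightarrow> Fa (cmp C g f) = cmp E (Fa g) (Fa f))"

definition faithful :: "('o,'a) cat \<Rightarrow> ('p,'b) cat \<Rightarrow> ('o \<Rightarrow> 'p) \<Rightarrow> ('a \<Rightarrow> 'b) \<Rightarrow> bool" where
  "faithful C E Fo Fa \<longleftrightarrow> is_functor C E Fo Fa \<and>
     (\<forall>x \<in> ob C. \<forall>y \<in> ob C. inj_on Fa (hom C x y))"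

text \<open>L : C -> E is left adjoint to R : E -> C (L -| R), given by a unit whose
  components are universal arrows (Mac Lane, CWM IV.1, Thm 2(ii)).\<close>
definition adjunction :: "('o,'a) cat \<Rightarrow> ('p,'b) cat \<Rightarrow> ('o \<Rightarrow> 'p) \<Rightarrow> ('a \<Rightarrow> 'b)
    \<Rightarrow> ('p \<Rightarrow> 'o) \<Rightarrow> ('b \<Rightarrow> 'a) \<Rightarrow> bool" where
  "adjunction C E Lo La Ro Ra \<longleftrightarrow> is_functor C E Lo La \<and> is_functor E C Ro Ra \<and>
     (\<exists>\<eta>. \<forall>c \<in> ob C. \<eta> c \<in> hom C c (Ro (Lo c)) \<and>
        (\<forall>e \<in> ob E. \<forall>f \<in> hom C c (Ro e).
            \<exists>!g. g \<in> hom E (Lo c) e \<and> cmp C (Ra g) (\<eta> c) = f))"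

definition monic :: "('o,'a) cat \<Rightarrow> 'a \<Rightarrow> bool" where
  "monic C m \<longleftrightarrow> m \<in> ar C \<and>
     (\<forall>g \<in> ar C. \<forall>h \<in> ar C. cd C g = dm C m \<and> cd C h = dm C m \<and> dm C g = dm C h \<and>
        cmp C m g = cmp C m h \<longrightarrow> g = h)"

definition epic :: "('o,'a) cat \<Rightarrow> 'a \<Rightarrow> bool" where
  "epic C e \<longleftrightarrow> e \<in> ar C \<and>
     (\<forall>g \<in> ar C. \<forall>h \<in> ar C. dm C g = cd C e \<and> dm C h = cd C e \<and> cd C g = cd C h \<and>
        cmp C g e = cmp C h e \<longrightarrow> g = h)"

definition isom :: "('o,'a) cat \<Rightarrow> 'a \<Rightarrow> bool" where
  "isom C f \<longleftrightarrow> f \<in> ar C \<and>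
     (\<exists>g \<in> hom C (cd C f) (dm C f). cmp C g f = ident C (dm C f) \<and> cmp C f g = ident C (cd C f))"

definition extremal_epi :: "('o,'a) cat \<Rightarrow> 'a \<Rightarrow> bool" where
  "extremal_epi C e \<longleftrightarrow> epic C e \<and>
     (\<forall>m \<in> ar C. \<forall>g \<in> ar C. monic C m \<and> cd C g = dm C m \<and> e = cmp C m g \<longrightarrow> isom C m)"

definition extremal_epi_mono_category :: "('o,'a) cat \<Rightarrow> bool" where
  "extremal_epi_mono_category C \<longleftrightarrow> category C \<and>
     (\<forall>\<phi> \<in> ar C. \<exists>e m. extremal_epi C e \<and> monic C m \<and> cd C e = dm C m \<and> \<phi> = cmp C m e) \<and>
     (\<forall>e m u v. extremal_epi C e \<and> monic C m \<and> u \<in> ar C \<and> v \<in> ar C \<and>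
        dm C u = dm C e \<and> cd C u = dm C m \<and> dm C v = cd C e \<and> cd C v = cd C m \<and>
        cmp C v e = cmp C m u \<longrightarrow>
        (\<exists>!w. w \<in> hom C (cd C e) (dm C m) \<and> cmp C w e = u \<and> cmp C m w = v))"

definition M :: "('o,'a) cat \<Rightarrow> 'o \<Rightarrow> 'a set" where
  "M C d = {\<phi> \<in> ar C. dm C \<phi> = d}"

text \<open>fgeq C phi1 phi2 means phi1 \<ge> phi2, i.e. h phi1 = phi2 for some h.\<close>
definition fgeq :: "('o,'a) cat \<Rightarrow> 'a \<Rightarrow> 'a \<Rightarrow> bool" where
  "fgeq C \<phi>1 \<phi>2 \<longleftrightarrow> (\<exists>h \<in> ar C. dm C h = cd C \<phi>1 \<and> cmp C h \<phi>1 = \<phi>2)"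

definition directed :: "('o,'a) cat \<Rightarrow> 'a set \<Rightarrow> bool" where
  "directed C S \<longleftrightarrow> (\<forall>\<phi>1 \<in> S. \<forall>\<phi>2 \<in> S. \<exists>\<psi> \<in> S. fgeq C \<psi> \<phi>1 \<and> fgeq C \<psi> \<phi>2)"

definition saturated :: "('o,'a) cat \<Rightarrow> 'o \<Rightarrow> 'a set \<Rightarrow> bool" where
  "saturated C d F \<longleftrightarrow> (\<forall>\<phi>1 \<in> F. \<forall>\<phi>2 \<in> M C d. fgeq C \<phi>1 \<phi>2 \<longrightarrow> \<phi>2 \<in> F)"

definition proj_filtration :: "('o,'a) cat \<Rightarrow> 'o \<Rightarrow> 'a set \<Rightarrow> bool" where
  "proj_filtration C d F \<longleftrightarrow> F \<subseteq> M C d \<and> F \<noteq> {} \<and> directed C F \<and> saturated C d F"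

definition saturation :: "('o,'a) cat \<Rightarrow> 'o \<Rightarrow> 'a set \<Rightarrow> 'a set" where
  "saturation C d S = {\<psi> \<in> M C d. \<exists>\<phi> \<in> S. fgeq C \<phi> \<psi>}"

definition initial :: "('o,'a) cat \<Rightarrow> 'a set \<Rightarrow> 'a set \<Rightarrow> bool" where
  "initial C F S \<longleftrightarrow> S \<subseteq> F \<and> (\<forall>\<phi> \<in> F. \<exists>\<psi> \<in> S. fgeq C \<psi> \<phi>)"

definition pull_back :: "('o,'a) cat \<Rightarrow> 'a \<Rightarrow> 'a set \<Rightarrow> 'a set" where
  "pull_back C f F = {cmp C \<phi> f | \<phi>. \<phi> \<in> F}"

definition reduced :: "('o,'a) cat \<Rightarrow> 'o \<Rightarrow> 'a set \<Rightarrow> bool" where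
  "reduced C d F \<longleftrightarrow> proj_filtration C d F \<and>
     (\<exists>S. initial C F S \<and> (\<forall>e \<in> S. extremal_epi C e))"

text \<open>Objects of P(D) are pairs (d,F); an arrow (d1,F1) -> (d2,F2) given by f is
  represented as the triple ((d1,F1), f, (d2,F2)).\<close>
type_synonym ('o,'a) pobj = "'o \<times> 'a set"
type_synonym ('o,'a) parr = "('o,'a) pobj \<times> 'a \<times> ('o,'a) pobj"

definition Pcat :: "('o,'a) cat \<Rightarrow> (('o,'a) pobj, ('o,'a) parr) cat" where
  "Pcat C = \<lparr> ob = {(d,F). d \<in> ob C \<and> proj_filtration C d F},
              ar = {((d1,F1), f, (d2,F2)) | d1 F1 f d2 F2.
                      d1 \<in> ob C \<and> proj_filtration C d1 F1 \<and>
                      d2 \<in> ob C \<and> proj_filtration C d2 F2 \<and>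
                      f \<in> hom C d1 d2 \<and> pull_back C f F2 \<subseteq> F1},
              dm = (\<lambda>a. fst a),
              cd = (\<lambda>a. snd (snd a)),
              ident = (\<lambda>X. (X, ident C (fst X), X)),
              cmp = (\<lambda>b a. (fst a, cmp C (fst (snd b)) (fst (snd a)), snd (snd b))) \<rparr>"

definition Qcat :: "('o,'a) cat \<Rightarrow> (('o,'a) pobj, ('o,'a) parr) cat" where
  "Qcat C = \<lparr> ob = {X \<in> ob (Pcat C). reduced C (fst X) (snd X)},
              ar = {a \<in> ar (Pcat C). reduced C (fst (fst a)) (snd (fst a)) \<and>
                                    reduced C (fst (snd (snd a))) (snd (snd (snd a)))},
              dm = dm (Pcat C), cd = cd (Pcat C),
              ident = ident (Pcat C), cmp = cmp (Pcat C) \<rparr>"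

definition hatF :: "('o,'a) cat \<Rightarrow> 'o \<Rightarrow> 'a set \<Rightarrow> 'a set" where
  "hatF C d F = saturation C d
     {e. \<exists>\<phi> \<in> F. \<exists>m. extremal_epi C e \<and> monic C m \<and> cd C e = dm C m \<and> \<phi> = cmp C m e}"

definition R_ob :: "('o,'a) cat \<Rightarrow> ('o,'a) pobj \<Rightarrow> ('o,'a) pobj" where
  "R_ob C X = (fst X, hatF C (fst X) (snd X))"

definition R_ar :: "('o,'a) cat \<Rightarrow> ('o,'a) parr \<Rightarrow> ('o,'a) parr" where
  "R_ar C a = (R_ob C (fst a), fst (snd a), R_ob C (snd (snd a)))"

end

theory Submission
  imports Defs
begin

(* In an (extremal epi, mono) category every phi = m e has an
   extremal-epi part e, and the diagonal fill-in shows that these parts are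
   monotone: whenever m e \<ge> m' u with m' monic, already e \<ge> u.  From this single
   comparison lemma everything follows:
   - hat F is directed (epi parts of an upper bound dominate the given epi
     parts), saturated by construction, and has the epi parts as an initial
     subclass, so it is a reduced projective filtration;
   - pulling back commutes with taking epi parts up to \<ge>, so every P-arrow
     stays an arrow between the hatted filtrations, making R a functor;
   - F \<subseteq> hat F always, and hat F \<subseteq> F when F is reduced, so R I = id.
   The unit of the adjunction I -| R is the identity of each reduced object:
   an arrow X \<rightarrow> R Y in Q is the same as an arrow X \<rightarrow> Y in P, since
   F_Y \<subseteq> hat F_Y and hat F_X = F_X. *)

lemma cat_ar_ob: "category C \<Longrightarrow> f \<in> ar C \<Longrightarrow> dm C f \<in> ob C \<and> cd C f \<in> ob C"
  unfolding category_def by blast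

lemma cat_id:
  "category C \<Longrightarrow> x \<in> ob C \<Longrightarrow> ident C x \<in> ar C \<and> dm C (ident C x) = x \<and> cd C (ident C x) = x"
  unfolding category_def hom_def by blast

lemma cat_cmp:
  "category C \<Longrightarrow> f \<in> ar C \<Longrightarrow> g \<in> ar C \<Longrightarrow> cd C f = dm C g \<Longrightarrow>
   cmp C g f \<in> ar C \<and> dm C (cmp C g f) = dm C f \<and> cd C (cmp C g f) = cd C g"
  unfolding category_def hom_def by blast

lemma cat_idl: "category C \<Longrightarrow> f \<in> ar C \<Longrightarrow> cmp C (ident C (cd C f)) f = f"
  unfolding category_def by blast

lemma cat_idr: "category C \<Longrightarrow> f \<in> ar C \<Longrightarrow> cmp C f (ident C (dm C f)) = f"
  unfolding category_def by blast

lemma cat_assoc: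
  "category C \<Longrightarrow> f \<in> ar C \<Longrightarrow> g \<in> ar C \<Longrightarrow> h \<in> ar C \<Longrightarrow> cd C f = dm C g \<Longrightarrow> cd C g = dm C h \<Longrightarrow>
   cmp C h (cmp C g f) = cmp C (cmp C h g) f"
  unfolding category_def by blast

lemma monic_ident: "category C \<Longrightarrow> x \<in> ob C \<Longrightarrow> monic C (ident C x)"
  unfolding monic_def using cat_id cat_idl by metis

lemma extremal_epi_ar: "extremal_epi C e \<Longrightarrow> e \<in> ar C"
  unfolding extremal_epi_def epic_def by blast

lemma monic_ar: "monic C m \<Longrightarrow> m \<in> ar C"
  unfolding monic_def by blast

section \<open>The quasi-order on arrows with a common source\<close>

lemma fgeq_refl: "category C \<Longrightarrow> f \<in> ar C \<Longrightarrow> fgeq C f f"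
  unfolding fgeq_def using cat_id cat_ar_ob cat_idl by metis

lemma fgeq_trans:
  assumes C: "category C" and f: "f \<in> ar C" and fg: "fgeq C f g" and gk: "fgeq C g k"
  shows "fgeq C f k"
proof -
  obtain h1 where h1: "h1 \<in> ar C" "dm C h1 = cd C f" "cmp C h1 f = g"
    using fg unfolding fgeq_def by blast
  obtain h2 where h2: "h2 \<in> ar C" "dm C h2 = cd C g" "cmp C h2 g = k"
    using gk unfolding fgeq_def by blast
  have cd_g: "cd C g = cd C h1" using cat_cmp[OF C f h1(1)] h1 by simp
  have "cmp C (cmp C h2 h1) f = k" using cat_assoc[OF C f h1(1) h2(1)] h1 h2 cd_g by simp
  moreover have "cmp C h2 h1 \<in> ar C \<and> dm C (cmp C h2 h1) = cd C f"
    using cat_cmp[OF C h1(1) h2(1)] h1 h2 cd_g by simp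
  ultimately show ?thesis unfolding fgeq_def by blast
qed

lemma fgeq_postcomp: "f \<in> ar C \<Longrightarrow> m \<in> ar C \<Longrightarrow> cd C f = dm C m \<Longrightarrow> fgeq C f (cmp C m f)"
  unfolding fgeq_def by metis

lemma fgeq_precomp:
  assumes C: "category C" and ab: "fgeq C a b" and a: "a \<in> ar C"
    and f: "f \<in> ar C" "cd C f = dm C a"
  shows "fgeq C (cmp C a f) (cmp C b f)"
proof -
  obtain h where h: "h \<in> ar C" "dm C h = cd C a" "cmp C h a = b" using ab unfolding fgeq_def by blast
  have "cmp C h (cmp C a f) = cmp C b f" using cat_assoc[OF C f(1) a h(1) f(2) h(2)[symmetric]] h(3) by simp
  moreover have "dm C h = cd C (cmp C a f)" using cat_cmp[OF C f(1) a f(2)] h(2) by simp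
  ultimately show ?thesis unfolding fgeq_def using h(1) by blast
qed

section \<open>(Extremal epi, mono)-factorisations\<close>

lemma eem_category: "extremal_epi_mono_category C \<Longrightarrow> category C"
  unfolding extremal_epi_mono_category_def by blast

lemma factorisation:
  assumes D: "extremal_epi_mono_category C" and p: "p \<in> ar C"
  obtains e m where "extremal_epi C e" "monic C m" "cd C e = dm C m" "p = cmp C m e"
    "e \<in> ar C" "m \<in> ar C" "dm C e = dm C p"
proof -
  obtain e m where em: "extremal_epi C e" "monic C m" "cd C e = dm C m" "p = cmp C m e"
    using D p unfolding extremal_epi_mono_category_def by blast
  show ?thesis
    using that[OF em extremal_epi_ar[OF em(1)] monic_ar[OF em(2)]] em(4)
      cat_cmp[OF eem_category[OF D] extremal_epi_ar[OF em(1)] monic_ar[OF em(2)] em(3)]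
    by simp
qed

text \<open>The diagonal fill-in, read in terms of the order: an extremal epi lies above
  every arrow u making the square  v e = m u  commute.\<close>
lemma diagonal_fgeq:
  assumes D: "extremal_epi_mono_category C" and e: "extremal_epi C e" and m: "monic C m"
    and u: "u \<in> ar C" and v: "v \<in> ar C" and "dm C u = dm C e" "cd C u = dm C m"
    and "dm C v = cd C e" "cd C v = cd C m" "cmp C v e = cmp C m u"
  shows "fgeq C e u"
proof -
  from D have "\<exists>!w. w \<in> hom C (cd C e) (dm C m) \<and> cmp C w e = u \<and> cmp C m w = v"
    unfolding extremal_epi_mono_category_def using assms by blast
  then obtain w where "w \<in> hom C (cd C e) (dm C m)" "cmp C w e = u" by blast
  then show ?thesis unfolding fgeq_def hom_def by blast
qed

text \<open>The key comparison: if m e \<ge> m' u with e an extremal epi and m, m' monic,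
  then already e \<ge> u.  Both directedness of hat F and its compatibility with
  pull backs reduce to this.\<close>
lemma epi_part_dominates:
  assumes D: "extremal_epi_mono_category C"
    and e: "extremal_epi C e" and m: "monic C m" and em: "cd C e = dm C m"
    and m': "monic C m'" and u: "u \<in> ar C" and um': "cd C u = dm C m'"
    and ge: "fgeq C (cmp C m e) (cmp C m' u)"
  shows "fgeq C e u"
proof -
  have C: "category C" using eem_category[OF D] .
  note ar = extremal_epi_ar[OF e] monic_ar[OF m] monic_ar[OF m']
  have me: "cmp C m e \<in> ar C \<and> dm C (cmp C m e) = dm C e \<and> cd C (cmp C m e) = cd C m"
    using cat_cmp[OF C ar(1,2) em] .
  have m'u: "cmp C m' u \<in> ar C \<and> dm C (cmp C m' u) = dm C u \<and> cd C (cmp C m' u) = cd C m'"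
    using cat_cmp[OF C u ar(3) um'] .
  obtain h where h: "h \<in> ar C" "dm C h = cd C m" "cmp C h (cmp C m e) = cmp C m' u"
    using ge me unfolding fgeq_def by auto
  have hme: "cmp C h (cmp C m e) \<in> ar C \<and> dm C (cmp C h (cmp C m e)) = dm C e
      \<and> cd C (cmp C h (cmp C m e)) = cd C h"
    using cat_cmp[OF C conjunct1[OF me] h(1)] me h(2) by simp
  have hm: "cmp C h m \<in> ar C \<and> dm C (cmp C h m) = dm C m \<and> cd C (cmp C h m) = cd C h"
    using cat_cmp[OF C ar(2) h(1) h(2)[symmetric]] .
  have square: "cmp C (cmp C h m) e = cmp C m' u"
    using h(3) cat_assoc[OF C ar(1,2) h(1) em h(2)[symmetric]] by simp
  show ?thesis
    by (rule diagonal_fgeq[OF D e m' u conjunct1[OF hm]])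
      (use hme m'u h(3) hm em um' square in auto)
qed

lemma saturation_filtration:
  assumes C: "category C" and S: "S \<subseteq> M C d" "S \<noteq> {}" "directed C S"
  shows "proj_filtration C d (saturation C d S) \<and> initial C (saturation C d S) S"
proof -
  let ?F = "saturation C d S"
  have S_ar: "\<And>s. s \<in> S \<Longrightarrow> s \<in> ar C" using S(1) unfolding M_def by blast
  have S_sub: "S \<subseteq> ?F"
    using S(1) fgeq_refl[OF C] S_ar unfolding saturation_def by blast
  have below: "\<And>q. q \<in> ?F \<Longrightarrow> \<exists>s \<in> S. fgeq C s q" unfolding saturation_def by blast
  have directed: "directed C ?F"
    unfolding directed_def
  proof (intro ballI)
    fix q1 q2 assume "q1 \<in> ?F" "q2 \<in> ?F"
    then obtain s1 s2 where s: "s1 \<in> S" "fgeq C s1 q1" "s2 \<in> S" "fgeq C s2 q2"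
      using below by blast
    then obtain s where "s \<in> S" "fgeq C s s1" "fgeq C s s2"
      using S(3) unfolding directed_def by blast
    then show "\<exists>\<psi> \<in> ?F. fgeq C \<psi> q1 \<and> fgeq C \<psi> q2"
      using S_sub s fgeq_trans[OF C S_ar] by blast
  qed
  have saturated: "saturated C d ?F"
    unfolding saturated_def saturation_def using fgeq_trans[OF C S_ar] by blast
  have "?F \<subseteq> M C d" "?F \<noteq> {}" using S_sub S(2) unfolding saturation_def by blast+
  then show ?thesis
    using directed saturated S_sub below unfolding proj_filtration_def initial_def by blast
qed

section \<open>Extremal-epi parts and the reflection hat F\<close>

definition epi_parts :: "('o,'a) cat \<Rightarrow> 'a set \<Rightarrow> 'a set" where
  "epi_parts C F =
     {e. \<exists>\<phi> \<in> F. \<exists>m. extremal_epi C e \<and> monic C m \<and> cd C e = dm C m \<and> \<phi> = cmp C m e}"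

lemma hatF_epi_parts: "hatF C d F = saturation C d (epi_parts C F)"
  unfolding hatF_def epi_parts_def by simp

lemma epi_partsE:
  assumes "e \<in> epi_parts C F"
  obtains p m where "p \<in> F" "extremal_epi C e" "monic C m" "cd C e = dm C m" "p = cmp C m e"
  using assms unfolding epi_parts_def by blast

lemma epi_part_exists:
  assumes D: "extremal_epi_mono_category C" and F: "F \<subseteq> M C d" and p: "p \<in> F"
  obtains e m where "e \<in> epi_parts C F" "extremal_epi C e" "monic C m" "cd C e = dm C m"
    "p = cmp C m e" "e \<in> ar C" "fgeq C e p"
proof -
  have p_ar: "p \<in> ar C" using p F unfolding M_def by blast
  obtain e m where em: "extremal_epi C e" "monic C m" "cd C e = dm C m" "p = cmp C m e"
    "e \<in> ar C" "m \<in> ar C" by (rule factorisation[OF D p_ar])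
  have "e \<in> epi_parts C F" unfolding epi_parts_def using em p by blast
  moreover have "fgeq C e p" using fgeq_postcomp[OF em(5,6,3)] em(4) by simp
  ultimately show ?thesis using that em by blast
qed

lemma epi_parts_M:
  assumes C: "category C" and F: "F \<subseteq> M C d"
  shows "epi_parts C F \<subseteq> M C d"
proof
  fix e assume "e \<in> epi_parts C F"
  then obtain p m where pm: "p \<in> F" "extremal_epi C e" "monic C m" "cd C e = dm C m" "p = cmp C m e"
    by (rule epi_partsE)
  have "dm C p = dm C e"
    using pm cat_cmp[OF C extremal_epi_ar[OF pm(2)] monic_ar[OF pm(3)] pm(4)] by simp
  then show "e \<in> M C d" using pm F extremal_epi_ar[OF pm(2)] unfolding M_def by auto
qed

text \<open>Epi parts of a directed F are directed: the epi part of a common upper bound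
  lies above the given epi parts, by the comparison lemma.\<close>
lemma epi_parts_directed:
  assumes D: "extremal_epi_mono_category C" and F: "proj_filtration C d F"
  shows "directed C (epi_parts C F)"
  unfolding directed_def
proof (intro ballI)
  have FM: "F \<subseteq> M C d" using F unfolding proj_filtration_def by blast
  fix e1 e2 assume "e1 \<in> epi_parts C F" "e2 \<in> epi_parts C F"
  then obtain p1 m1 p2 m2 where
    f1: "p1 \<in> F" "extremal_epi C e1" "monic C m1" "cd C e1 = dm C m1" "p1 = cmp C m1 e1" and
    f2: "p2 \<in> F" "extremal_epi C e2" "monic C m2" "cd C e2 = dm C m2" "p2 = cmp C m2 e2"
    by (metis epi_partsE)
  obtain p where p: "p \<in> F" "fgeq C p p1" "fgeq C p p2"
    using F f1(1) f2(1) unfolding proj_filtration_def directed_def by blast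
  obtain e m where em: "e \<in> epi_parts C F" "extremal_epi C e" "monic C m" "cd C e = dm C m"
    "p = cmp C m e" by (rule epi_part_exists[OF D FM p(1)])
  have "fgeq C e e1"
    using epi_part_dominates[OF D em(2-4) f1(3) extremal_epi_ar[OF f1(2)] f1(4)] p(2) em(5) f1(5)
    by simp
  moreover have "fgeq C e e2"
    using epi_part_dominates[OF D em(2-4) f2(3) extremal_epi_ar[OF f2(2)] f2(4)] p(3) em(5) f2(5)
    by simp
  ultimately show "\<exists>\<psi> \<in> epi_parts C F. fgeq C \<psi> e1 \<and> fgeq C \<psi> e2" using em(1) by blast
qed

lemma hatF_reduced:
  assumes D: "extremal_epi_mono_category C" and F: "proj_filtration C d F"
  shows "reduced C d (hatF C d F)"
proof -
  have C: "category C" using eem_category[OF D] .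
  have FM: "F \<subseteq> M C d" using F unfolding proj_filtration_def by blast
  obtain p where "p \<in> F" using F unfolding proj_filtration_def by blast
  then obtain e where "e \<in> epi_parts C F" by (rule epi_part_exists[OF D FM])
  then have "epi_parts C F \<noteq> {}" by blast
  then have "proj_filtration C d (hatF C d F) \<and> initial C (hatF C d F) (epi_parts C F)"
    unfolding hatF_epi_parts
    using saturation_filtration[OF C epi_parts_M[OF C FM]] epi_parts_directed[OF D F] by blast
  moreover have "\<forall>e \<in> epi_parts C F. extremal_epi C e" by (blast elim: epi_partsE)
  ultimately show ?thesis unfolding reduced_def by blast
qed

text \<open>hat F contains F: every member lies below its own epi part.\<close>
lemma subset_hatF:
  assumes D: "extremal_epi_mono_category C" and F: "F \<subseteq> M C d"
  shows "F \<subseteq> hatF C d F"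
proof
  fix p assume p: "p \<in> F"
  obtain e where "e \<in> epi_parts C F" "fgeq C e p" by (rule epi_part_exists[OF D F p])
  then show "p \<in> hatF C d F" unfolding hatF_epi_parts saturation_def using p F by blast
qed

text \<open>For a reduced F, hat F = F: an epi part of p \<in> F lies below an extremal epi
  s \<in> F above p (comparison lemma with the identity as mono part of s), hence in F.\<close>
lemma hatF_of_reduced:
  assumes D: "extremal_epi_mono_category C" and R: "reduced C d F"
  shows "hatF C d F = F"
proof
  have C: "category C" using eem_category[OF D] .
  have F: "proj_filtration C d F" using R unfolding reduced_def by blast
  have FM: "F \<subseteq> M C d" using F unfolding proj_filtration_def by blast
  obtain S where S: "initial C F S" "\<forall>s \<in> S. extremal_epi C s" using R unfolding reduced_def by blast
  show "F \<subseteq> hatF C d F" using subset_hatF[OF D FM] .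
  show "hatF C d F \<subseteq> F"
  proof
    fix q assume "q \<in> hatF C d F"
    then obtain e where e: "e \<in> epi_parts C F" "fgeq C e q" "q \<in> M C d"
      unfolding hatF_epi_parts saturation_def by blast
    obtain p m where p: "p \<in> F" "extremal_epi C e" "monic C m" "cd C e = dm C m" "p = cmp C m e"
      using e(1) by (rule epi_partsE)
    obtain s where s: "s \<in> S" "fgeq C s p" using S(1) p(1) unfolding initial_def by blast
    have s_F: "s \<in> F" using s(1) S(1) unfolding initial_def by blast
    have s_ar: "s \<in> ar C" using s_F FM unfolding M_def by auto
    have cd_s: "cd C s \<in> ob C" using cat_ar_ob[OF C s_ar] by simp
    have "fgeq C (cmp C (ident C (cd C s)) s) (cmp C m e)" using s(2) p(5) cat_idl[OF C s_ar] by simp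
    then have "fgeq C s e"
      using epi_part_dominates[OF D _ monic_ident[OF C cd_s] _ p(3) extremal_epi_ar[OF p(2)] p(4)]
        S(2) s(1) cat_id[OF C cd_s] by auto
    moreover have "e \<in> M C d" using epi_parts_M[OF C FM] e(1) by blast
    ultimately have "e \<in> F" using F s_F unfolding proj_filtration_def saturated_def by blast
    then show "q \<in> F" using F e(2,3) unfolding proj_filtration_def saturated_def by blast
  qed
qed

text \<open>Pulling back along a P-arrow f is compatible with hat: the epi part e of
  p2 f (p2 = m2 e2 \<in> F2) lies above e2 f, by the comparison lemma.\<close>
lemma pull_back_hatF:
  assumes D: "extremal_epi_mono_category C" and F1: "proj_filtration C d1 F1"
    and F2: "proj_filtration C d2 F2" and f: "f \<in> hom C d1 d2" and pb: "pull_back C f F2 \<subseteq> F1"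
  shows "pull_back C f (hatF C d2 F2) \<subseteq> hatF C d1 F1"
proof
  have C: "category C" using eem_category[OF D] .
  have F1M: "F1 \<subseteq> M C d1" and F2M: "F2 \<subseteq> M C d2" using F1 F2 unfolding proj_filtration_def by blast+
  have f_ar: "f \<in> ar C" "dm C f = d1" "cd C f = d2" using f unfolding hom_def by auto
  fix x assume "x \<in> pull_back C f (hatF C d2 F2)"
  then obtain q where q: "q \<in> hatF C d2 F2" "x = cmp C q f" unfolding pull_back_def by blast
  obtain e2 where e2: "e2 \<in> epi_parts C F2" "fgeq C e2 q" "q \<in> M C d2"
    using q(1) unfolding hatF_epi_parts saturation_def by blast
  obtain p2 m2 where p2: "p2 \<in> F2" "extremal_epi C e2" "monic C m2" "cd C e2 = dm C m2" "p2 = cmp C m2 e2"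
    using e2(1) by (rule epi_partsE)
  have e2_M: "e2 \<in> ar C" "dm C e2 = d2" using epi_parts_M[OF C F2M] e2(1) unfolding M_def by auto
  have p2f: "cmp C p2 f \<in> F1" using pb p2(1) unfolding pull_back_def by blast
  obtain e m where em: "e \<in> epi_parts C F1" "extremal_epi C e" "monic C m" "cd C e = dm C m"
    "cmp C p2 f = cmp C m e" "e \<in> ar C" by (rule epi_part_exists[OF D F1M p2f])
  have e2f: "cmp C e2 f \<in> ar C \<and> cd C (cmp C e2 f) = cd C e2"
    using cat_cmp[OF C f_ar(1) e2_M(1)] f_ar e2_M by simp
  have "cmp C p2 f = cmp C m2 (cmp C e2 f)"
    using p2(5) cat_assoc[OF C f_ar(1) e2_M(1) monic_ar[OF p2(3)]] f_ar e2_M p2(4) by simp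
  then have "fgeq C (cmp C m e) (cmp C m2 (cmp C e2 f))"
    using em(5) fgeq_refl[OF C] e2f cat_cmp[OF C em(6) monic_ar[OF em(3)] em(4)] by metis
  then have "fgeq C e (cmp C e2 f)"
    using epi_part_dominates[OF D em(2-4) p2(3)] e2f p2(4) by simp
  moreover have "fgeq C (cmp C e2 f) (cmp C q f)"
    using fgeq_precomp[OF C e2(2) e2_M(1) f_ar(1)] e2_M f_ar by simp
  ultimately have "fgeq C e x" using fgeq_trans[OF C em(6)] q(2) by blast
  moreover have "x \<in> M C d1" using q(2) e2(3) f_ar cat_cmp[OF C f_ar(1)] unfolding M_def by auto
  ultimately show "x \<in> hatF C d1 F1" using em(1) unfolding hatF_epi_parts saturation_def by blast
qed

lemma Pcat_ob: "X \<in> ob (Pcat C) \<longleftrightarrow> fst X \<in> ob C \<and> proj_filtration C (fst X) (snd X)"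
  unfolding Pcat_def by (cases X) auto

lemma Pcat_ar:
  "a \<in> ar (Pcat C) \<longleftrightarrow> fst (fst a) \<in> ob C \<and> proj_filtration C (fst (fst a)) (snd (fst a)) \<and>
     fst (snd (snd a)) \<in> ob C \<and> proj_filtration C (fst (snd (snd a))) (snd (snd (snd a))) \<and>
     fst (snd a) \<in> hom C (fst (fst a)) (fst (snd (snd a))) \<and>
     pull_back C (fst (snd a)) (snd (snd (snd a))) \<subseteq> snd (fst a)"
  unfolding Pcat_def by (cases a) auto

lemma Qcat_ob: "X \<in> ob (Qcat C) \<longleftrightarrow> X \<in> ob (Pcat C) \<and> reduced C (fst X) (snd X)"
  unfolding Qcat_def by simp

lemma Qcat_ar:
  "a \<in> ar (Qcat C) \<longleftrightarrow> a \<in> ar (Pcat C) \<and> reduced C (fst (fst a)) (snd (fst a)) \<and>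
     reduced C (fst (snd (snd a))) (snd (snd (snd a)))"
  unfolding Qcat_def by simp

lemma Pcat_structure:
  "dm (Pcat C) a = fst a" "cd (Pcat C) a = snd (snd a)" "ident (Pcat C) X = (X, ident C (fst X), X)"
  "cmp (Pcat C) b a = (fst a, cmp C (fst (snd b)) (fst (snd a)), snd (snd b))"
  "dm (Qcat C) = dm (Pcat C)" "cd (Qcat C) = cd (Pcat C)"
  "ident (Qcat C) = ident (Pcat C)" "cmp (Qcat C) = cmp (Pcat C)"
  unfolding Pcat_def Qcat_def by simp_all

lemma R_structure:
  "fst (R_ob C X) = fst X" "snd (R_ob C X) = hatF C (fst X) (snd X)"
  "fst (R_ar C a) = R_ob C (fst a)" "fst (snd (R_ar C a)) = fst (snd a)"
  "snd (snd (R_ar C a)) = R_ob C (snd (snd a))"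
  unfolding R_ob_def R_ar_def by simp_all

section \<open>The functor R and the inclusion I\<close>

lemma R_functor:
  assumes D: "extremal_epi_mono_category D"
  shows "is_functor (Pcat D) (Qcat D) (R_ob D) (R_ar D)"
  unfolding is_functor_def
proof (intro conjI ballI impI)
  fix X assume "X \<in> ob (Pcat D)"
  then show "R_ob D X \<in> ob (Qcat D)"
    using hatF_reduced[OF D] unfolding Qcat_ob Pcat_ob R_structure reduced_def by blast
next
  fix a assume a: "a \<in> ar (Pcat D)"
  have "pull_back D (fst (snd a)) (hatF D (fst (snd (snd a))) (snd (snd (snd a))))
      \<subseteq> hatF D (fst (fst a)) (snd (fst a))"
    using pull_back_hatF[OF D] a unfolding Pcat_ar by blast
  then have "R_ar D a \<in> ar (Qcat D)"
    using a hatF_reduced[OF D] unfolding Qcat_ar Pcat_ar R_structure reduced_def by blast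
  then show "R_ar D a \<in> hom (Qcat D) (R_ob D (dm (Pcat D) a)) (R_ob D (cd (Pcat D) a))"
    by (simp add: hom_def Pcat_structure R_structure)
qed (simp_all add: Pcat_structure R_ar_def R_ob_def)

text \<open>R keeps the underlying arrow of D, so it is faithful.\<close>
lemma R_faithful:
  assumes D: "extremal_epi_mono_category D"
  shows "faithful (Pcat D) (Qcat D) (R_ob D) (R_ar D)"
  unfolding faithful_def
proof (intro conjI R_functor[OF D] ballI inj_onI)
  fix X Y a b assume a: "a \<in> hom (Pcat D) X Y" and b: "b \<in> hom (Pcat D) X Y"
    and Rab: "R_ar D a = R_ar D b"
  have "fst (snd a) = fst (snd b)" using arg_cong[OF Rab, of "\<lambda>z. fst (snd z)"] unfolding R_structure .
  moreover have "fst a = fst b" "snd (snd a) = snd (snd b)" using a b unfolding hom_def Pcat_structure by auto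
  ultimately show "a = b" by (simp add: prod_eq_iff)
qed

text \<open>R I = id on objects and arrows, since hat F = F for reduced F.\<close>
lemma R_ob_reduced: "extremal_epi_mono_category D \<Longrightarrow> X \<in> ob (Qcat D) \<Longrightarrow> R_ob D X = X"
  using hatF_of_reduced[of D "fst X" "snd X"] unfolding Qcat_ob R_ob_def by (simp add: prod_eq_iff)

lemma R_ar_reduced: "extremal_epi_mono_category D \<Longrightarrow> a \<in> ar (Qcat D) \<Longrightarrow> R_ar D a = a"
  using hatF_of_reduced[of D "fst (fst a)" "snd (fst a)"]
    hatF_of_reduced[of D "fst (snd (snd a))" "snd (snd (snd a))"]
  unfolding Qcat_ar R_ar_def R_ob_def by (simp add: prod_eq_iff)

lemma inclusion_functor: "is_functor (Qcat C) (Pcat C) id id"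
  unfolding is_functor_def hom_def by (auto simp: Qcat_ob Qcat_ar Pcat_structure)

section \<open>The adjunction I -| R\<close>

text \<open>The unit at a reduced object X is its identity, an arrow X \<rightarrow> R X = X.\<close>
lemma unit_arrow:
  assumes D: "extremal_epi_mono_category D" and X: "X \<in> ob (Qcat D)"
  shows "ident (Qcat D) X \<in> hom (Qcat D) X (R_ob D (id X))"
proof -
  have C: "category D" using eem_category[OF D] .
  have X_P: "fst X \<in> ob D" "proj_filtration D (fst X) (snd X)" "reduced D (fst X) (snd X)"
    using X unfolding Qcat_ob Pcat_ob by auto
  have id_hom: "ident D (fst X) \<in> hom D (fst X) (fst X)" using cat_id[OF C X_P(1)] unfolding hom_def by simp
  have "pull_back D (ident D (fst X)) (snd X) \<subseteq> snd X"
  proof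
    fix z assume "z \<in> pull_back D (ident D (fst X)) (snd X)"
    then obtain p where p: "p \<in> snd X" "z = cmp D p (ident D (fst X))" unfolding pull_back_def by blast
    have "p \<in> ar D" "dm D p = fst X" using p(1) X_P(2) unfolding proj_filtration_def M_def by auto
    then show "z \<in> snd X" using p cat_idr[OF C] by metis
  qed
  then have "ident (Qcat D) X \<in> ar (Qcat D)" using X_P id_hom unfolding Qcat_ar Pcat_ar Pcat_structure by simp
  then show ?thesis using R_ob_reduced[OF D X] unfolding hom_def Pcat_structure by simp
qed

lemma R_after_unit:
  assumes C: "category D" and g: "g \<in> ar (Pcat D)" "fst g = X"
  shows "cmp (Qcat D) (R_ar D g) (ident (Qcat D) X) = (X, fst (snd g), R_ob D (snd (snd g)))"
proof -
  have "fst (snd g) \<in> ar D" "dm D (fst (snd g)) = fst X" using g unfolding Pcat_ar hom_def by auto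
  then have "cmp D (fst (snd g)) (ident D (fst X)) = fst (snd g)" using cat_idr[OF C] by metis
  then show ?thesis unfolding Pcat_structure R_structure by simp
qed

text \<open>Universality of the unit: a Q-arrow f : X \<rightarrow> R Y has the same underlying arrow
  as a unique P-arrow X \<rightarrow> Y, because F_Y \<subseteq> hat F_Y.\<close>
lemma unit_universal:
  assumes D: "extremal_epi_mono_category D" and X: "X \<in> ob (Qcat D)" and Y: "Y \<in> ob (Pcat D)"
    and f: "f \<in> hom (Qcat D) X (R_ob D Y)"
  shows "\<exists>!g. g \<in> hom (Pcat D) (id X) Y \<and> cmp (Qcat D) (R_ar D g) (ident (Qcat D) X) = f"
proof (rule ex1I[of _ "(X, fst (snd f), Y)"])
  have C: "category D" using eem_category[OF D] .
  have f_P: "f \<in> ar (Pcat D)" "fst f = X" "snd (snd f) = R_ob D Y"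
    using f unfolding hom_def Qcat_ar Pcat_structure by auto
  have f_D: "fst (snd f) \<in> hom D (fst X) (fst Y)"
    "pull_back D (fst (snd f)) (hatF D (fst Y) (snd Y)) \<subseteq> snd X"
    using f_P unfolding Pcat_ar by (auto simp: R_structure)
  have "snd Y \<subseteq> hatF D (fst Y) (snd Y)"
    using subset_hatF[OF D] Y unfolding Pcat_ob proj_filtration_def by blast
  then have "pull_back D (fst (snd f)) (snd Y) \<subseteq> snd X" using f_D(2) unfolding pull_back_def by blast
  then have g: "(X, fst (snd f), Y) \<in> ar (Pcat D)" using X Y f_D(1) unfolding Pcat_ar Qcat_ob Pcat_ob by simp
  show "(X, fst (snd f), Y) \<in> hom (Pcat D) (id X) Y \<and>
      cmp (Qcat D) (R_ar D (X, fst (snd f), Y)) (ident (Qcat D) X) = f"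
    using g R_after_unit[OF C g] f_P unfolding hom_def Pcat_structure by (simp add: prod_eq_iff)
  fix g assume g: "g \<in> hom (Pcat D) (id X) Y \<and> cmp (Qcat D) (R_ar D g) (ident (Qcat D) X) = f"
  have g_P: "g \<in> ar (Pcat D)" "fst g = X" "snd (snd g) = Y" using g unfolding hom_def Pcat_structure by auto
  have "fst (snd g) = fst (snd f)" using R_after_unit[OF C g_P(1,2)] g f_P by auto
  then show "g = (X, fst (snd f), Y)" using g_P by (simp add: prod_eq_iff)
qed

lemma inclusion_left_adjoint:
  assumes D: "extremal_epi_mono_category D"
  shows "adjunction (Qcat D) (Pcat D) id id (R_ob D) (R_ar D)"
  unfolding adjunction_def
  using inclusion_functor R_functor[OF D] unit_arrow[OF D] unit_universal[OF D] by blast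

theorem mainTheorem3:
  fixes D :: "('o,'a) cat"
  assumes "extremal_epi_mono_category D"
  shows "is_functor (Pcat D) (Qcat D) (R_ob D) (R_ar D)
       \<and> faithful (Pcat D) (Qcat D) (R_ob D) (R_ar D)
       \<and> (\<forall>X \<in> ob (Qcat D). R_ob D (id X) = X)
       \<and> (\<forall>a \<in> ar (Qcat D). R_ar D (id a) = a)
       \<and> adjunction (Qcat D) (Pcat D) id id (R_ob D) (R_ar D)"
  using R_functor[OF assms] R_faithful[OF assms] R_ob_reduced[OF assms] R_ar_reduced[OF assms]
    inclusion_left_adjoint[OF assms]
  by simp

end
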